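(* Consider the model $Y=X\beta+\varepsilon$, $X\in\mathbb{R}^{N\times D}$ with $N\ge D$, $\varepsilon\sim\mathcal{N}(0,\tau^{-1}I_N)$, $\tau>0$, and prior $\beta\sim\mathcal{N}(0,\Sigma_\beta)$ with $\Sigma_\beta$ positive definite. Let $X=V\,\mathrm{diag}(\lambda)U^\top+\bar V\,\mathrm{diag}(\bar\lambda)\bar U^\top$ be a singular value decomposition, where $[U,\bar U]\in\mathbb{R}^{D\times D}$ is orthogonal with $U\in\mathbb{R}^{D\times M}$, $[V,\bar V]\in\mathbb{R}^{N\times D}$ has orthonormal columns, $\lambda=(\lambda_1,\dots,\lambda_M)$, $\bar\lambda=(\bar\lambda_1,\dots,\bar\lambda_{D-M})$ and $\lambda_1\ge\dots\ge\lambda_M\ge\bar\lambda_1\ge\dots\ge\bar\lambda_{D-M}\ge0$. The exact posterior is $\mathcal{N}(\mu_N,\Sigma_N)$ with $\Sigma_N^{-1}=\Sigma_\beta^{-1}+\tau X^\top X$, $\mu_N=\tau\Sigma_NX^\top Y$, and the approximate posterior obtained by replacing $X$ by $XUU^\top$ is $\mathcal{N}(\tilde\mu_N,\tilde\Sigma_N)$ with $\tilde\Sigma_N^{-1}=\Sigma_\beta^{-1}+\tau UU^\top X^\top XUU^\top$, $\tilde\mu_N=\tau\tilde\Sigma_NUU^\top X^\top Y$. Then $$\|\mu_N-\tilde\mu_N\|_2\le\frac{\bar\lambda_1\big(\bar\lambda_1\|\bar U^\top\tilde\mu_N\|_2+\|\bar V^\top Y\|_2\big)}{\|\tau\Sigma_\beta\|_2^{-1}+\bar\lambda_{D-M}^2}$$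 and $\|\Sigma_N^{-1}-\tilde\Sigma_N^{-1}\|_2=\tau\bar\lambda_1^2$ (indeed $\Sigma_N^{-1}-\tilde\Sigma_N^{-1}=\tau\bar U\,\mathrm{diag}(\bar\lambda\odot\bar\lambda)\bar U^\top$).
   Context: $\|\cdot\|_2$ on matrices is the spectral norm; $\odot$ is componentwise multiplication. *)

theory Defs
  imports "HOL-Analysis.Analysis"
begin

definition spec_norm :: "real^'a^'b \<Rightarrow> real" where
  "spec_norm A = onorm (\<lambda>x. A *v x)"

definition diag_mat :: "real^'a \<Rightarrow> real^'a^'a" where
  "diag_mat v = (\<chi> i j. if i = j then v $ i else 0)"

definition pos_def :: "real^'a^'a \<Rightarrow> bool" where
  "pos_def S \<longleftrightarrow> transpose S = S \<and> (\<forall>x. x \<noteq> 0 \<longrightarrow> x \<bullet> (S *v x) > 0)"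

end

theory Submission
  imports Defs
begin

text \<open>Let P and P' be the exact and truncated posterior precisions. Both contain
  matrix_inv Sb and the U-block tau U diag(lam*lam) U^T of tau X^T X, so
  P - P' = tau Ub diag(lamb*lamb) Ub^T, whose spectral norm is tau times the square of the
  largest entry of lamb. For the means, P mu = tau X^T Y and P' mu' = tau U U^T X^T Y give
  P (mu - mu') = tau Ub diag(lamb) (Vb^T Y - diag(lamb) Ub^T mu'). On the other hand P is coercive,
  x . P x >= tau (1 / |tau Sb| + lamb_min^2) |x|^2, because every singular value of X is at least
  the smallest entry lamb_min of lamb and [U, Ub] is orthogonal. Dividing gives the bound.\<close>

section \<open>Matrices with orthonormal columns\<close>

declare transpose_matrix_vector [simp del]

lemma inner_mult_vector_transpose: "(A *v x) \<bullet> (y::real^_) = x \<bullet> (transpose A *v y)"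
  by (metis dot_lmul_matrix inner_commute transpose_matrix_vector)

lemma inner_transpose_mult_vector: "x \<bullet> (A *v y) = (transpose A *v x) \<bullet> (y::real^_)"
  by (metis inner_mult_vector_transpose inner_commute)

lemma transpose_zero [simp]: "transpose (0::real^'a^'b) = 0"
  by (simp add: transpose_def vec_eq_iff)

lemma transpose_add: "transpose (A + B) = transpose A + transpose (B::real^'a^'b)"
  by (simp add: transpose_def vec_eq_iff)

lemma transpose_mult_eq_0_commute: "transpose A ** B = (0::real^'a^'b) \<Longrightarrow> transpose B ** A = 0"
  by (metis matrix_transpose_mul transpose_transpose transpose_zero)

lemma orthonormal_cancel_vector: "transpose A ** A = mat 1 \<Longrightarrow> transpose A *v (A *v z) = (z::real^_)"
  by (metis matrix_vector_mul_assoc matrix_vector_mul_lid)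

lemma orthogonal_cancel_vector: "transpose A ** B = 0 \<Longrightarrow> transpose A *v (B *v z) = (0::real^_)"
  by (metis matrix_vector_mul_assoc matrix_vector_mult_0)

lemma matrix_inv_mult_vector:
  assumes "invertible A" shows "A *v (matrix_inv A *v x) = (x::real^_)"
proof -
  have "A ** matrix_inv A = mat 1 \<and> matrix_inv A ** A = mat 1"
    using assms unfolding invertible_def matrix_inv_def by (rule someI_ex)
  then show ?thesis by (metis matrix_vector_mul_assoc matrix_vector_mul_lid)
qed

lemma norm_orthonormal_mult_vector:
  assumes "transpose A ** A = mat 1" shows "norm (A *v x) = norm (x::real^_)"
proof -
  have "norm (A *v x)^2 = norm x ^2"
    by (simp add: power2_norm_eq_inner inner_mult_vector_transpose orthonormal_cancel_vector[OF assms])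
  then show ?thesis by (simp add: power2_eq_iff_nonneg)
qed

lemma norm_transpose_orthonormal_le:
  assumes "transpose A ** A = mat 1" shows "norm (transpose A *v x) \<le> norm (x::real^_)"
proof -
  define w where "w = transpose A *v x"
  have "norm w ^2 = (A *v w) \<bullet> x" by (simp add: power2_norm_eq_inner inner_mult_vector_transpose w_def)
  also have "\<dots> \<le> norm w * norm x"
    using norm_cauchy_schwarz[of "A *v w" x] by (simp add: norm_orthonormal_mult_vector[OF assms])
  finally show ?thesis unfolding w_def[symmetric]
    by (auto simp: power2_eq_square mult_le_cancel_left)
qed

lemma orthonormal_complement_columns_span:
  fixes U :: "real^'m^'d" and W :: "real^'k^'d"
  assumes oU: "transpose U ** U = mat 1" and oW: "transpose W ** W = mat 1"
    and oUW: "transpose U ** W = 0" and card: "CARD('m) + CARD('k) = CARD('d)"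
  shows "span (range (\<lambda>i. U *v axis i 1) \<union> range (\<lambda>j. W *v axis j 1)) = UNIV"
proof -
  define cu where "cu i = U *v axis i (1::real)" for i
  define cw where "cw j = W *v axis j (1::real)" for j
  have uu: "cu i \<bullet> cu i' = (if i = i' then 1 else 0)" for i i'
    unfolding cu_def inner_mult_vector_transpose orthonormal_cancel_vector[OF oU] inner_axis_axis by simp
  have ww: "cw j \<bullet> cw j' = (if j = j' then 1 else 0)" for j j'
    unfolding cw_def inner_mult_vector_transpose orthonormal_cancel_vector[OF oW] inner_axis_axis by simp
  have uw: "cu i \<bullet> cw j = 0" for i j
    unfolding cu_def cw_def inner_mult_vector_transpose orthogonal_cancel_vector[OF oUW] by simp
  have injU: "inj cu" by (rule injI) (metis uu zero_neq_one)
  have injW: "inj cw" by (rule injI) (metis ww zero_neq_one)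
  have disj: "range cu \<inter> range cw = {}"
    using uu uw by (auto) (metis zero_neq_one)
  define S where "S = range cu \<union> range cw"
  have cardS: "card S = CARD('d)"
    unfolding S_def using disj card by (simp add: card_Un_disjoint card_image injU injW)
  have ind: "independent S"
  proof (rule pairwise_orthogonal_independent)
    show "pairwise orthogonal S"
      unfolding S_def pairwise_def orthogonal_def using uu ww uw by (auto simp: inner_commute)
    show "0 \<notin> S" unfolding S_def using uu ww by (auto) (metis inner_zero_left zero_neq_one)+
  qed
  have "UNIV \<subseteq> span S"
    by (rule card_ge_dim_independent[OF _ ind]) (simp_all add: cardS)
  then show ?thesis unfolding S_def cu_def cw_def by auto
qed

lemma orthonormal_complement_resolution:
  fixes U :: "real^'m^'d" and W :: "real^'k^'d"
  assumes oU: "transpose U ** U = mat 1" and oW: "transpose W ** W = mat 1"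
    and oUW: "transpose U ** W = 0" and card: "CARD('m) + CARD('k) = CARD('d)"
  shows "U *v (transpose U *v x) + W *v (transpose W *v x) = x"
proof -
  have oWU: "transpose W ** U = 0" by (rule transpose_mult_eq_0_commute[OF oUW])
  have lin: "linear (\<lambda>x. U *v (transpose U *v x) + W *v (transpose W *v x))"
    by (intro linear_compose_add linear_compose[of "\<lambda>x. transpose _ *v x" "\<lambda>x. _ *v x", unfolded o_def]
        matrix_vector_mul_linear)
  have "(\<lambda>x. U *v (transpose U *v x) + W *v (transpose W *v x)) x = id x"
  proof (rule linear_eq_on_span[OF lin linear_id])
    show "x \<in> span (range (\<lambda>i. U *v axis i 1) \<union> range (\<lambda>j. W *v axis j 1))"
      unfolding orthonormal_complement_columns_span[OF assms] by simp
  qed (auto simp: orthonormal_cancel_vector[OF oU] orthonormal_cancel_vector[OF oW]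
        orthogonal_cancel_vector[OF oUW] orthogonal_cancel_vector[OF oWU])
  then show ?thesis by simp
qed

lemma norm_power2_orthonormal_complement:
  fixes U :: "real^'m^'d" and W :: "real^'k^'d"
  assumes "transpose U ** U = mat 1" "transpose W ** W = mat 1" "transpose U ** W = 0"
    and "CARD('m) + CARD('k) = CARD('d)"
  shows "norm x^2 = norm (transpose U *v x)^2 + norm (transpose W *v x)^2"
proof -
  have "norm x^2 = x \<bullet> (U *v (transpose U *v x) + W *v (transpose W *v x))"
    by (simp add: orthonormal_complement_resolution[OF assms] power2_norm_eq_inner)
  then show ?thesis
    by (simp add: inner_add_right inner_transpose_mult_vector power2_norm_eq_inner)
qed

section \<open>Diagonal matrices and the spectral norm\<close>

lemma transpose_diag_mat [simp]: "transpose (diag_mat v) = diag_mat v"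
  by (simp add: transpose_def diag_mat_def vec_eq_iff)

lemma diag_mat_mult_vector: "diag_mat v *v x = (\<chi> i. v$i * x$i)"
proof -
  have "(\<Sum>j\<in>UNIV. (if i = j then v $ i else 0) * x $ j) = (\<Sum>j\<in>UNIV. if i = j then v $ i * x $ j else 0)" for i
    by (rule sum.cong) auto
  then show ?thesis unfolding diag_mat_def matrix_vector_mult_def vec_eq_iff by simp
qed

lemma diag_mat_square_mult_vector:
  "diag_mat (\<chi> i. v$i * v$i) *v x = diag_mat v *v (diag_mat v *v x)"
  by (simp add: diag_mat_mult_vector vec_eq_iff mult.assoc)

lemma inner_diag_mat_square:
  "x \<bullet> (W *v (diag_mat v *v (diag_mat v *v (transpose W *v x)))) = norm (diag_mat v *v (transpose W *v x))^2"
proof -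
  let ?y = "transpose W *v x"
  have "x \<bullet> (W *v (diag_mat v *v (diag_mat v *v ?y))) = ?y \<bullet> (diag_mat v *v (diag_mat v *v ?y))"
    by (rule inner_transpose_mult_vector)
  also have "\<dots> = (diag_mat v *v ?y) \<bullet> (diag_mat v *v ?y)"
    using inner_transpose_mult_vector[of ?y "diag_mat v" "diag_mat v *v ?y"] by simp
  finally show ?thesis by (simp add: power2_norm_eq_inner)
qed

lemma norm_power2_vec: "norm (x::real^'n)^2 = (\<Sum>i\<in>UNIV. (x$i)^2)"
  unfolding power2_norm_eq_inner inner_vec_def by (simp add: power2_eq_square)

lemma norm_diag_mat_mult_vector_le:
  assumes "\<And>i. \<bar>v$i\<bar> \<le> c" shows "norm (diag_mat v *v x) \<le> c * norm x"
proof -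
  have c: "0 \<le> c" using assms[of undefined] by linarith
  have "(v $ i * x $ i)^2 \<le> c^2 * (x $ i)^2" for i
    using assms[of i] c by (simp add: power_mult_distrib mult_right_mono abs_le_square_iff[symmetric])
  then have "norm (diag_mat v *v x)^2 \<le> (c * norm x)^2"
    by (simp add: norm_power2_vec diag_mat_mult_vector power_mult_distrib sum_distrib_left sum_mono)
  then show ?thesis by (rule power2_le_imp_le) (use c in simp)
qed

lemma norm_diag_mat_mult_vector_ge:
  assumes "\<And>i. c \<le> \<bar>v$i\<bar>" "0 \<le> c" shows "c * norm x \<le> norm (diag_mat v *v x)"
proof -
  have "c^2 * (x $ i)^2 \<le> (v $ i * x $ i)^2" for i
    using assms by (simp add: power_mult_distrib mult_right_mono abs_le_square_iff[symmetric])
  then have "(c * norm x)^2 \<le> norm (diag_mat v *v x)^2"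
    by (simp add: norm_power2_vec diag_mat_mult_vector power_mult_distrib sum_distrib_left sum_mono)
  then show ?thesis by (rule power2_le_imp_le) simp
qed

lemma norm_mult_vector_le_spec_norm: "norm (A *v x) \<le> spec_norm A * norm x"
  unfolding spec_norm_def by (rule onorm) simp

lemma spec_norm_scaleR: "spec_norm (c *\<^sub>R A) = \<bar>c\<bar> * spec_norm A"
  unfolding spec_norm_def scaleR_matrix_vector_assoc[symmetric] by (rule onorm_scaleR) simp

lemma spec_norm_orthonormal_diag:
  assumes oW: "transpose W ** W = mat 1" and top: "\<And>j. \<bar>d$j\<bar> \<le> d$j0"
  shows "spec_norm (W ** diag_mat d ** transpose W) = d$j0"
proof (rule antisym)
  have Wv: "(W ** diag_mat d ** transpose W) *v x = W *v (diag_mat d *v (transpose W *v x))" for x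
    by (simp add: matrix_vector_mul_assoc matrix_mul_assoc)
  show "spec_norm (W ** diag_mat d ** transpose W) \<le> d$j0"
    unfolding spec_norm_def
  proof (rule onorm_bound)
    show "0 \<le> d$j0" using top[of j0] by linarith
    fix x
    have "norm (diag_mat d *v (transpose W *v x)) \<le> d$j0 * norm (transpose W *v x)"
      by (rule norm_diag_mat_mult_vector_le[OF top])
    also have "\<dots> \<le> d$j0 * norm x"
      using norm_transpose_orthonormal_le[OF oW] \<open>0 \<le> d$j0\<close> by (rule mult_left_mono)
    finally show "norm ((W ** diag_mat d ** transpose W) *v x) \<le> d$j0 * norm x"
      by (simp add: Wv norm_orthonormal_mult_vector[OF oW])
  qed
next
  define x0 where "x0 = W *v axis j0 (1::real)"
  have "diag_mat d *v axis j0 1 = d$j0 *\<^sub>R axis j0 (1::real)"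
    by (simp add: diag_mat_mult_vector axis_def vec_eq_iff)
  then have "(W ** diag_mat d ** transpose W) *v x0 = d$j0 *\<^sub>R x0"
    by (simp add: x0_def matrix_vector_mul_assoc[symmetric] orthonormal_cancel_vector[OF oW]
        matrix_vector_mult_scaleR)
  moreover have "norm x0 = 1" by (simp add: x0_def norm_orthonormal_mult_vector[OF oW])
  moreover have "norm ((W ** diag_mat d ** transpose W) *v x0) / norm x0 \<le> spec_norm (W ** diag_mat d ** transpose W)"
    unfolding spec_norm_def by (rule le_onorm) simp
  ultimately show "d$j0 \<le> spec_norm (W ** diag_mat d ** transpose W)"
    using top[of j0] by simp
qed

section \<open>Positive definite matrices\<close>

lemma psd_Cauchy_Schwarz:
  fixes S :: "real^'n^'n"
  assumes sym: "transpose S = S" and psd: "\<And>x. 0 \<le> x \<bullet> (S *v x)"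
  shows "(u \<bullet> (S *v v))^2 \<le> (u \<bullet> (S *v u)) * (v \<bullet> (S *v v))"
proof -
  define a b c where "a = u \<bullet> (S *v u)" and "b = u \<bullet> (S *v v)" and "c = v \<bullet> (S *v v)"
  have "v \<bullet> (S *v u) = b" unfolding b_def by (metis inner_mult_vector_transpose inner_commute sym)
  then have q: "0 \<le> a + 2*t*b + t^2*c" for t
    using psd[of "u + t *\<^sub>R v"]
    by (simp add: matrix_vector_right_distrib matrix_vector_mult_scaleR inner_add_left inner_add_right
        a_def b_def c_def algebra_simps power2_eq_square)
  have "b^2 \<le> a * c"
  proof (cases "c = 0")
    case True
    have "b = 0"
    proof (rule ccontr)
      assume "b \<noteq> 0"
      then have "a + 2*(-(a+1)/(2*b))*b + (-(a+1)/(2*b))^2*c = -1" using True by (simp add: field_simps)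
      then show False using q[of "-(a+1)/(2*b)"] by simp
    qed
    then show ?thesis using True by simp
  next
    case False
    then have "0 < c" using psd[of v] c_def by simp
    moreover have "a + 2*(-b/c)*b + (-b/c)^2*c = a - b^2/c" using \<open>0 < c\<close> by (simp add: field_simps power2_eq_square)
    ultimately have "b^2/c \<le> a" using q[of "-b/c"] by simp
    then show ?thesis using \<open>0 < c\<close> by (simp add: pos_divide_le_eq mult.commute)
  qed
  then show ?thesis by (simp add: a_def b_def c_def)
qed

lemma invertible_if_quadratic_pos:
  fixes A :: "real^'n^'n"
  assumes "\<And>x. x \<noteq> 0 \<Longrightarrow> 0 < x \<bullet> (A *v x)" shows "invertible A"
proof -
  have "\<forall>x. A *v x = 0 \<longrightarrow> x = 0" using assms by fastforce
  then show ?thesis using matrix_left_invertible_ker invertible_left_inverse by blast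
qed

lemma norm_le_if_quadratic_ge:
  assumes "0 < \<kappa>" and "\<kappa> * norm x^2 \<le> x \<bullet> (A *v x)"
  shows "norm x \<le> norm (A *v x) / \<kappa>"
proof (cases "x = 0")
  case False
  have "\<kappa> * norm x^2 \<le> norm x * norm (A *v x)"
    using assms(2) norm_cauchy_schwarz[of x "A *v x"] by linarith
  then show ?thesis using False assms(1) by (simp add: power2_eq_square le_divide_eq mult.commute)
qed simp

lemma pos_def_invertible: "pos_def S \<Longrightarrow> invertible S"
  unfolding pos_def_def by (blast intro: invertible_if_quadratic_pos)

lemma spec_norm_pos_def_pos:
  assumes "pos_def (S::real^'n^'n)" shows "0 < spec_norm S"
proof -
  have "S *v axis undefined 1 \<noteq> 0"
    using assms unfolding pos_def_def by (metis axis_eq_0_iff inner_zero_right less_irrefl one_neq_zero)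
  then show ?thesis unfolding spec_norm_def by (subst onorm_pos_lt) auto
qed

text \<open>With x = S y the claim reads |S y|^2 <= spec_norm S * (y . S y); it follows from
  Cauchy-Schwarz for the form (u, v) |-> u . S v, applied to y and S y.\<close>
lemma pos_def_inverse_quadratic_ge:
  fixes S :: "real^'n^'n"
  assumes pd: "pos_def S"
  shows "norm x^2 \<le> spec_norm S * (x \<bullet> (matrix_inv S *v x))"
proof -
  have sym: "transpose S = S" and pos: "\<And>x. x \<noteq> 0 \<Longrightarrow> 0 < x \<bullet> (S *v x)"
    using pd unfolding pos_def_def by auto
  have psd: "0 \<le> x \<bullet> (S *v x)" for x using pos[of x] by (cases "x = 0") auto
  define y where "y = matrix_inv S *v x"
  define s where "s = spec_norm S"
  have x: "x = S *v y" unfolding y_def by (simp add: matrix_inv_mult_vector pos_def_invertible[OF pd])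
  have SSy: "y \<bullet> (S *v (S *v y)) = norm (S *v y)^2"
    by (metis inner_mult_vector_transpose sym power2_norm_eq_inner)
  have "(y \<bullet> (S *v (S *v y)))^2 \<le> (y \<bullet> (S *v y)) * ((S *v y) \<bullet> (S *v (S *v y)))"
    by (rule psd_Cauchy_Schwarz[OF sym psd])
  also have "(S *v y) \<bullet> (S *v (S *v y)) \<le> norm (S *v y) * (s * norm (S *v y))"
    using norm_cauchy_schwarz[of "S *v y" "S *v (S *v y)"] norm_mult_vector_le_spec_norm[of S "S *v y"]
    unfolding s_def by (smt (verit) mult_left_mono norm_ge_zero)
  then have "(y \<bullet> (S *v y)) * ((S *v y) \<bullet> (S *v (S *v y))) \<le> (y \<bullet> (S *v y)) * (norm (S *v y) * (s * norm (S *v y)))"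
    using psd[of y] by (rule mult_left_mono)
  finally have "(norm (S *v y)^2)^2 \<le> (y \<bullet> (S *v y)) * s * norm (S *v y)^2"
    unfolding SSy by (simp add: power2_eq_square ac_simps)
  then have "norm (S *v y)^2 \<le> s * (y \<bullet> (S *v y))"
    by (cases "norm (S *v y) = 0") (auto simp: power2_eq_square mult.commute)
  then show ?thesis unfolding s_def y_def[symmetric] by (metis x inner_commute)
qed

section \<open>Thin singular value decompositions\<close>

context
  fixes X :: "real^'d^'n" and U :: "real^'m^'d" and Ub :: "real^'k^'d"
    and V :: "real^'m^'n" and Vb :: "real^'k^'n" and a :: "real^'m" and b :: "real^'k"
  assumes X_svd: "X = V ** diag_mat a ** transpose U + Vb ** diag_mat b ** transpose Ub"
begin

lemma svd_mult_vector:
  "X *v x = V *v (diag_mat a *v (transpose U *v x)) + Vb *v (diag_mat b *v (transpose Ub *v x))"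
  unfolding X_svd by (simp add: matrix_vector_mult_add_rdistrib matrix_vector_mul_assoc matrix_mul_assoc)

lemma svd_transpose_mult_vector:
  "transpose X *v y = U *v (diag_mat a *v (transpose V *v y)) + Ub *v (diag_mat b *v (transpose Vb *v y))"
  unfolding X_svd
  by (simp add: transpose_add matrix_transpose_mul matrix_vector_mult_add_rdistrib matrix_vector_mul_assoc
      matrix_mul_assoc)

lemma svd_gram_mult_vector:
  assumes oV: "transpose V ** V = mat 1" and oVb: "transpose Vb ** Vb = mat 1" and oVVb: "transpose V ** Vb = 0"
  shows "(transpose X ** X) *v x
    = U *v (diag_mat a *v (diag_mat a *v (transpose U *v x)))
    + Ub *v (diag_mat b *v (diag_mat b *v (transpose Ub *v x)))"
  by (simp add: matrix_vector_mul_assoc[symmetric] svd_mult_vector svd_transpose_mult_vector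
      matrix_vector_right_distrib orthonormal_cancel_vector[OF oV] orthonormal_cancel_vector[OF oVb]
      orthogonal_cancel_vector[OF oVVb] orthogonal_cancel_vector[OF transpose_mult_eq_0_commute[OF oVVb]])

lemma svd_projected_transpose_mult_vector:
  assumes oU: "transpose U ** U = mat 1" and oUUb: "transpose U ** Ub = 0"
  shows "(U ** transpose U ** transpose X) *v y = U *v (diag_mat a *v (transpose V *v y))"
  by (simp add: matrix_vector_mul_assoc[symmetric] svd_transpose_mult_vector matrix_vector_right_distrib
      orthonormal_cancel_vector[OF oU] orthogonal_cancel_vector[OF oUUb])

lemma svd_projected_gram_mult_vector:
  assumes "transpose V ** V = mat 1" "transpose Vb ** Vb = mat 1" "transpose V ** Vb = 0"
    and oU: "transpose U ** U = mat 1" and oUUb: "transpose U ** Ub = 0"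
  shows "(U ** transpose U ** transpose X ** X ** (U ** transpose U)) *v x
    = U *v (diag_mat a *v (diag_mat a *v (transpose U *v x)))"
proof -
  have "(U ** transpose U ** transpose X ** X ** (U ** transpose U)) *v x
      = U *v (transpose U *v ((transpose X ** X) *v (U *v (transpose U *v x))))"
    by (simp add: matrix_vector_mul_assoc matrix_mul_assoc)
  then show ?thesis
    by (simp add: svd_gram_mult_vector[OF assms(1-3)] matrix_vector_right_distrib
        orthonormal_cancel_vector[OF oU] orthogonal_cancel_vector[OF oUUb]
        orthogonal_cancel_vector[OF transpose_mult_eq_0_commute[OF oUUb]])
qed

end

section \<open>Exact and truncated Bayesian posteriors\<close>

locale truncated_svd_regression =
  fixes X :: "real^'d^'n" and Y :: "real^'n" and \<tau> :: real and Sb :: "real^'d^'d"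
    and U :: "real^'m::{finite,linorder}^'d" and Ub :: "real^'k::{finite,linorder}^'d"
    and V :: "real^'m::{finite,linorder}^'n" and Vb :: "real^'k::{finite,linorder}^'n"
    and lam :: "real^'m::{finite,linorder}" and lamb :: "real^'k::{finite,linorder}"
  assumes tau_pos: "\<tau> > 0" and prior_pos_def: "pos_def Sb"
    and card_split: "CARD('m::{finite,linorder}) + CARD('k::{finite,linorder}) = CARD('d)"
    and U_orthonormal: "transpose U ** U = mat 1" and Ub_orthonormal: "transpose Ub ** Ub = mat 1"
    and U_Ub_orthogonal: "transpose U ** Ub = 0"
    and V_orthonormal: "transpose V ** V = mat 1" and Vb_orthonormal: "transpose Vb ** Vb = mat 1"
    and V_Vb_orthogonal: "transpose V ** Vb = 0"
    and X_svd: "X = V ** diag_mat lam ** transpose U + Vb ** diag_mat lamb ** transpose Ub"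
    and lamb_antimono: "\<And>i j. i \<le> j \<Longrightarrow> lamb $ j \<le> lamb $ i"
    and lamb_le_lam: "\<And>i j. lamb $ j \<le> lam $ i"
    and lamb_nonneg: "\<And>j. 0 \<le> lamb $ j"
begin

abbreviation "prec \<equiv> matrix_inv Sb + \<tau> *\<^sub>R (transpose X ** X)"
abbreviation "proj \<equiv> U ** transpose U"
abbreviation "prec_trunc \<equiv> matrix_inv Sb + \<tau> *\<^sub>R (proj ** transpose X ** X ** proj)"
abbreviation "mean \<equiv> \<tau> *\<^sub>R (matrix_inv prec *v (transpose X *v Y))"
abbreviation "mean_trunc \<equiv> \<tau> *\<^sub>R (matrix_inv prec_trunc *v ((proj ** transpose X) *v Y))"
abbreviation "lamb_max \<equiv> lamb $ Min UNIV"
abbreviation "lamb_min \<equiv> lamb $ Max UNIV"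

lemma lamb_le_lamb_max: "lamb $ j \<le> lamb_max"
  by (rule lamb_antimono) simp

lemma lamb_min_le_lamb: "lamb_min \<le> lamb $ j"
  by (rule lamb_antimono) simp

lemma prec_mult_vector:
  "prec *v x = matrix_inv Sb *v x
     + \<tau> *\<^sub>R (U *v (diag_mat lam *v (diag_mat lam *v (transpose U *v x)))
              + Ub *v (diag_mat lamb *v (diag_mat lamb *v (transpose Ub *v x))))"
  by (simp add: matrix_vector_mult_add_rdistrib scaleR_matrix_vector_assoc[symmetric]
      svd_gram_mult_vector[OF X_svd V_orthonormal Vb_orthonormal V_Vb_orthogonal])

lemma prec_trunc_mult_vector:
  "prec_trunc *v x = matrix_inv Sb *v x + \<tau> *\<^sub>R (U *v (diag_mat lam *v (diag_mat lam *v (transpose U *v x))))"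
  by (simp add: matrix_vector_mult_add_rdistrib scaleR_matrix_vector_assoc[symmetric]
      svd_projected_gram_mult_vector[OF X_svd V_orthonormal Vb_orthonormal V_Vb_orthogonal
        U_orthonormal U_Ub_orthogonal])

lemma prec_diff_mult_vector:
  "(prec - prec_trunc) *v x = \<tau> *\<^sub>R (Ub *v (diag_mat lamb *v (diag_mat lamb *v (transpose Ub *v x))))"
  unfolding matrix_vector_mult_diff_rdistrib prec_mult_vector prec_trunc_mult_vector
  by (simp add: algebra_simps)

lemma prec_diff: "prec - prec_trunc = \<tau> *\<^sub>R (Ub ** diag_mat (\<chi> j. lamb $ j * lamb $ j) ** transpose Ub)"
  unfolding matrix_eq prec_diff_mult_vector
  by (simp add: scaleR_matrix_vector_assoc[symmetric] matrix_vector_mul_assoc[symmetric]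
      diag_mat_square_mult_vector)

lemma spec_norm_prec_diff: "spec_norm (prec - prec_trunc) = \<tau> * lamb_max ^ 2"
proof -
  have "\<bar>lamb $ j * lamb $ j\<bar> \<le> lamb_max * lamb_max" for j
    using lamb_le_lamb_max[of j] lamb_nonneg[of j] by (simp add: mult_mono)
  then show ?thesis
    unfolding prec_diff spec_norm_scaleR
    using spec_norm_orthonormal_diag[OF Ub_orthonormal, of "\<chi> j. lamb $ j * lamb $ j" "Min UNIV"] tau_pos
    by (simp add: power2_eq_square)
qed

lemma prec_quadratic_ge:
  "\<tau> * (inverse (spec_norm (\<tau> *\<^sub>R Sb)) + lamb_min^2) * norm x^2 \<le> x \<bullet> (prec *v x)"
proof -
  have "\<tau> * inverse (spec_norm (\<tau> *\<^sub>R Sb)) * norm x^2 \<le> x \<bullet> (matrix_inv Sb *v x)"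
    using pos_def_inverse_quadratic_ge[OF prior_pos_def, of x] spec_norm_pos_def_pos[OF prior_pos_def] tau_pos
    by (simp add: spec_norm_scaleR field_simps)
  moreover have "lamb_min^2 * norm x^2
      \<le> norm (diag_mat lam *v (transpose U *v x))^2 + norm (diag_mat lamb *v (transpose Ub *v x))^2"
  proof -
    have "lamb_min * norm (transpose U *v x) \<le> norm (diag_mat lam *v (transpose U *v x))"
      by (rule norm_diag_mat_mult_vector_ge) (use lamb_le_lam lamb_nonneg order_trans abs_ge_self in blast)+
    moreover have "lamb_min * norm (transpose Ub *v x) \<le> norm (diag_mat lamb *v (transpose Ub *v x))"
      by (rule norm_diag_mat_mult_vector_ge) (use lamb_min_le_lamb lamb_nonneg order_trans abs_ge_self in blast)+
    ultimately show ?thesis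
      using norm_power2_orthonormal_complement[OF U_orthonormal Ub_orthonormal U_Ub_orthogonal card_split, of x]
        lamb_nonneg[of "Max UNIV"]
      by (smt (verit) mult_nonneg_nonneg norm_ge_zero power_mono power_mult_distrib distrib_left)
  qed
  ultimately show ?thesis
    unfolding prec_mult_vector using mult_left_mono[OF _ less_imp_le[OF tau_pos]]
    by (fastforce simp: inner_add_right inner_diag_mat_square algebra_simps)
qed

lemma prec_trunc_quadratic_pos:
  assumes "x \<noteq> 0" shows "0 < x \<bullet> (prec_trunc *v x)"
proof -
  have "0 < norm x^2 / spec_norm Sb" using assms spec_norm_pos_def_pos[OF prior_pos_def] by simp
  also have "\<dots> \<le> x \<bullet> (matrix_inv Sb *v x)"
    using pos_def_inverse_quadratic_ge[OF prior_pos_def, of x] spec_norm_pos_def_pos[OF prior_pos_def]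
    by (simp add: divide_le_eq mult.commute)
  finally show ?thesis
    unfolding prec_trunc_mult_vector using tau_pos
    by (simp add: inner_add_right inner_diag_mat_square add_pos_nonneg)
qed

lemma prec_invertible: "invertible prec"
proof (rule invertible_if_quadratic_pos)
  fix x :: "real^'d" assume "x \<noteq> 0"
  have "0 < \<tau> * (inverse (spec_norm (\<tau> *\<^sub>R Sb)) + lamb_min^2) * norm x^2"
    using \<open>x \<noteq> 0\<close> tau_pos spec_norm_pos_def_pos[OF prior_pos_def]
    by (simp add: spec_norm_scaleR add_pos_nonneg)
  then show "0 < x \<bullet> (prec *v x)" using prec_quadratic_ge by (rule less_le_trans)
qed

lemma prec_trunc_invertible: "invertible prec_trunc"
  by (rule invertible_if_quadratic_pos) (rule prec_trunc_quadratic_pos)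

lemma prec_mult_mean_diff:
  "prec *v (mean - mean_trunc)
    = \<tau> *\<^sub>R (Ub *v (diag_mat lamb *v (transpose Vb *v Y - diag_mat lamb *v (transpose Ub *v mean_trunc))))"
proof -
  have "prec *v (mean - mean_trunc) = prec *v mean - prec_trunc *v mean_trunc - (prec - prec_trunc) *v mean_trunc"
    unfolding matrix_vector_mult_diff_distrib matrix_vector_mult_diff_rdistrib by simp
  also have "\<dots> = \<tau> *\<^sub>R (transpose X *v Y) - \<tau> *\<^sub>R ((proj ** transpose X) *v Y) - (prec - prec_trunc) *v mean_trunc"
    by (simp add: matrix_vector_mult_scaleR matrix_inv_mult_vector prec_invertible prec_trunc_invertible)
  also have "\<dots> = \<tau> *\<^sub>R (Ub *v (diag_mat lamb *v (transpose Vb *v Y - diag_mat lamb *v (transpose Ub *v mean_trunc))))"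
    unfolding prec_diff_mult_vector svd_transpose_mult_vector[OF X_svd]
      svd_projected_transpose_mult_vector[OF X_svd U_orthonormal U_Ub_orthogonal]
    by (simp add: matrix_vector_mult_diff_distrib algebra_simps)
  finally show ?thesis .
qed

lemma norm_prec_mult_mean_diff_le:
  "norm (prec *v (mean - mean_trunc))
    \<le> \<tau> * (lamb_max * (lamb_max * norm (transpose Ub *v mean_trunc) + norm (transpose Vb *v Y)))"
proof -
  have lamb_bound: "norm (diag_mat lamb *v z) \<le> lamb_max * norm z" for z
    by (rule norm_diag_mat_mult_vector_le) (metis lamb_le_lamb_max lamb_nonneg abs_of_nonneg)
  define w where "w = transpose Vb *v Y - diag_mat lamb *v (transpose Ub *v mean_trunc)"
  have "norm w \<le> lamb_max * norm (transpose Ub *v mean_trunc) + norm (transpose Vb *v Y)"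
    unfolding w_def using norm_triangle_ineq4 lamb_bound by (smt (verit))
  then have "norm (diag_mat lamb *v w) \<le> lamb_max * (lamb_max * norm (transpose Ub *v mean_trunc) + norm (transpose Vb *v Y))"
    using lamb_bound[of w] mult_left_mono lamb_nonneg[of "Min UNIV"] by (meson order_trans)
  then show ?thesis
    unfolding prec_mult_mean_diff w_def[symmetric] using tau_pos
    by (simp add: norm_orthonormal_mult_vector[OF Ub_orthonormal])
qed

lemma mean_diff_bound:
  "norm (mean - mean_trunc)
    \<le> lamb_max * (lamb_max * norm (transpose Ub *v mean_trunc) + norm (transpose Vb *v Y))
       / (inverse (spec_norm (\<tau> *\<^sub>R Sb)) + lamb_min ^ 2)"
proof -
  define \<kappa> where "\<kappa> = inverse (spec_norm (\<tau> *\<^sub>R Sb)) + lamb_min ^ 2"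
  have "0 < \<kappa>"
    unfolding \<kappa>_def using tau_pos spec_norm_pos_def_pos[OF prior_pos_def] by (simp add: spec_norm_scaleR add_pos_nonneg)
  have "norm (mean - mean_trunc) \<le> norm (prec *v (mean - mean_trunc)) / (\<tau> * \<kappa>)"
    by (rule norm_le_if_quadratic_ge) (use \<open>0 < \<kappa>\<close> tau_pos prec_quadratic_ge \<kappa>_def in auto)
  also have "\<dots> \<le> \<tau> * (lamb_max * (lamb_max * norm (transpose Ub *v mean_trunc) + norm (transpose Vb *v Y))) / (\<tau> * \<kappa>)"
    using \<open>0 < \<kappa>\<close> tau_pos by (intro divide_right_mono norm_prec_mult_mean_diff_le) simp
  finally show ?thesis unfolding \<kappa>_def using tau_pos by simp
qed

end

theorem mainTheorem3:
  fixes X :: "real^'d^'n" and Y :: "real^'n" and \<tau> :: real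
    and Sb :: "real^'d^'d"
    and U :: "real^'m::{finite,linorder}^'d" and Ub :: "real^'k::{finite,linorder}^'d"
    and V :: "real^'m::{finite,linorder}^'n" and Vb :: "real^'k::{finite,linorder}^'n"
    and lam :: "real^'m::{finite,linorder}" and lamb :: "real^'k::{finite,linorder}"
  assumes "CARD('d) \<le> CARD('n)"
    and "\<tau> > 0"
    and "pos_def Sb"
    and "CARD('m::{finite,linorder}) + CARD('k::{finite,linorder}) = CARD('d)"
    and "transpose U ** U = mat 1" and "transpose Ub ** Ub = mat 1" and "transpose U ** Ub = 0"
    and "transpose V ** V = mat 1" and "transpose Vb ** Vb = mat 1" and "transpose V ** Vb = 0"
    and "X = V ** diag_mat lam ** transpose U + Vb ** diag_mat lamb ** transpose Ub"
    and "\<And>i j. i \<le> j \<Longrightarrow> lam $ j \<le> lam $ i"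
    and "\<And>i j. i \<le> j \<Longrightarrow> lamb $ j \<le> lamb $ i"
    and "\<And>i j. lamb $ j \<le> lam $ i"
    and "\<And>j. 0 \<le> lamb $ j"
  shows "let P = matrix_inv Sb + \<tau> *\<^sub>R (transpose X ** X);
             SN = matrix_inv P;
             muN = \<tau> *\<^sub>R (SN *v (transpose X *v Y));
             UU = U ** transpose U;
             tP = matrix_inv Sb + \<tau> *\<^sub>R (UU ** transpose X ** X ** UU);
             tSN = matrix_inv tP;
             tmuN = \<tau> *\<^sub>R (tSN *v ((UU ** transpose X) *v Y));
             l1 = lamb $ (Min UNIV);
             lK = lamb $ (Max UNIV)
         in norm (muN - tmuN)
              \<le> l1 * (l1 * norm (transpose Ub *v tmuN) + norm (transpose Vb *v Y))
                 / (inverse (spec_norm (\<tau> *\<^sub>R Sb)) + lK ^ 2)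
          \<and> P - tP = \<tau> *\<^sub>R (Ub ** diag_mat (\<chi> j. lamb $ j * lamb $ j) ** transpose Ub)
          \<and> spec_norm (P - tP) = \<tau> * l1 ^ 2"
proof -
  interpret truncated_svd_regression X Y \<tau> Sb U Ub V Vb lam lamb
    by (rule truncated_svd_regression.intro) (fact assms)+
  show ?thesis
    unfolding Let_def using mean_diff_bound prec_diff spec_norm_prec_diff by blast
qed

end
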